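(* Let $C\in\mathbb{R}^{n\times n}$ be symmetric and $\rho>0$. A pair $(\tilde\sigma,\sigma)\in\mathbb{R}^{n\times r}\times\mathbb{R}^{n\times r}$ is a critical point of $G_\rho$ if and only if $\sigma=\tilde\sigma$ and $\tilde\sigma$ is a critical point of the problem $\min\{\langle C,\sigma\sigma^\top\rangle:\sigma\in\mathcal{M}\}$; in this sense the two problems have the same critical points.
   Context: $\langle A,B\rangle=\mathrm{Tr}(A^\top B)$, $\|\cdot\|_F$ Frobenius norm. For $\sigma\in\mathbb{R}^{n\times r}$, $\sigma_i$ is its $i$-th row; $\mathcal{M}=\{\sigma:\|\sigma_i\|=1\ \forall i\}$, $\mathcal{I}_S$ the indicator function of $S$. $G_\rho(\tilde\sigma,\sigma)=\langle C,\tilde\sigma\tilde\sigma^\top\rangle+\frac\rho2\|\tilde\sigma-\sigma\|_F^2+\sum_{i=1}^n\mathcal{I}_{\{\|u\|=1\}}(\tilde\sigma_i)$. A critical point of a function is a point where $0$ belongs to its limiting subdifferential; a critical point of the constrained problem is $\tilde\sigma\in\mathcal{M}$ with $0\in2C\tilde\sigma+\partial\big(\sum_i\mathcal{I}_{\{\|u\|=1\}}(\tilde\sigma_i)\big)$. *)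

theory Defs
  imports "HOL-Analysis.Analysis" "HOL-Library.Extended_Real"
begin

text \<open>Matrices in R^{n x r} are modelled as real^'r^'n (row i is s $ i).
  The HOL-Analysis inner product / norm on real^'r^'n is the Frobenius one.\<close>

definition frechet_subdiff :: "('a::real_inner \<Rightarrow> ereal) \<Rightarrow> 'a \<Rightarrow> 'a set" where
  "frechet_subdiff f x = {v. \<bar>f x\<bar> \<noteq> \<infinity> \<and>
     (\<forall>e>0. \<exists>d>0. \<forall>y. norm (y - x) < d \<longrightarrow>
        f x + ereal (inner v (y - x)) - ereal (e * norm (y - x)) \<le> f y)}"

definition limiting_subdiff :: "('a::real_inner \<Rightarrow> ereal) \<Rightarrow> 'a \<Rightarrow> 'a set" where
  "limiting_subdiff f x = {v. \<bar>f x\<bar> \<noteq> \<infinity> \<and>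
     (\<exists>xs vs. (\<forall>k. vs k \<in> frechet_subdiff f (xs k)) \<and> xs \<longlonglongrightarrow> x \<and>
        (\<lambda>k. f (xs k)) \<longlonglongrightarrow> f x \<and> vs \<longlonglongrightarrow> v)}"

definition critical_point :: "('a::real_inner \<Rightarrow> ereal) \<Rightarrow> 'a \<Rightarrow> bool" where
  "critical_point f x \<longleftrightarrow> 0 \<in> limiting_subdiff f x"

definition ind :: "'a set \<Rightarrow> 'a \<Rightarrow> ereal" where
  "ind S x = (if x \<in> S then 0 else \<infinity>)"

definition row_ind :: "real^'r^'n \<Rightarrow> ereal" where
  "row_ind s = (\<Sum>i\<in>UNIV. ind {u. norm u = 1} (s $ i))"

definition oblique :: "(real^'r^'n) set" where
  "oblique = {s. \<forall>i. norm (s $ i) = 1}"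

definition G_rho :: "real^'n^'n \<Rightarrow> real \<Rightarrow> ((real^'r^'n) \<times> (real^'r^'n)) \<Rightarrow> ereal" where
  "G_rho C \<rho> p =
     ereal (inner C (fst p ** transpose (fst p)) + \<rho> / 2 * (norm (fst p - snd p))^2)
       + row_ind (fst p)"

definition constrained_critical :: "real^'n^'n \<Rightarrow> real^'r^'n \<Rightarrow> bool" where
  "constrained_critical C st \<longleftrightarrow> st \<in> oblique \<and>
     (\<exists>v \<in> limiting_subdiff row_ind st. 2 *\<^sub>R (C ** st) + v = 0)"

end

theory Submission
  imports Defs
begin

text \<open>
  \<open>G_rho C \<rho>\<close> is a \<open>C\<^sup>1\<close> function plus the row-norm indicator of the first block alone.
  Adding a function with continuous gradient shifts every limiting subgradient by the gradient,
  and a function of the first block only has limiting subgradients \<open>(w, 0)\<close> with \<open>w\<close> a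
  limiting subgradient in the first block.  Hence \<open>0\<close> is a limiting subgradient of \<open>G_rho\<close>
  at \<open>(st, s)\<close> iff the second block of the gradient, \<open>\<rho> (s - st)\<close>, vanishes and
  \<open>-2 C st\<close> is a limiting subgradient of the row-norm indicator at \<open>st\<close>.
\<close>

lemma inner_matrix_mult_eq_sum:
  fixes A :: "real^'n^'m" and X :: "real^'r^'n" and Y :: "real^'r^'m"
  shows "inner (A ** X) Y = (\<Sum>i\<in>UNIV. \<Sum>k\<in>UNIV. A $ i $ k * inner (X $ k) (Y $ i))"
proof -
  have "(\<Sum>j\<in>UNIV. (\<Sum>k\<in>UNIV. A $ i $ k * X $ k $ j) * Y $ i $ j)
      = (\<Sum>k\<in>UNIV. A $ i $ k * (\<Sum>j\<in>UNIV. X $ k $ j * Y $ i $ j))" for i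
    by (simp add: sum_distrib_left sum_distrib_right mult.assoc) (rule sum.swap)
  then show ?thesis
    by (simp add: inner_vec_def matrix_matrix_mult_def)
qed

lemma inner_matrix_mult_left:
  fixes A :: "real^'n^'m" and X :: "real^'r^'n" and Y :: "real^'r^'m"
  shows "inner (A ** X) Y = inner X (transpose A ** Y)"
proof -
  have "inner (A ** X) Y = (\<Sum>i\<in>UNIV. \<Sum>k\<in>UNIV. A $ i $ k * inner (X $ k) (Y $ i))"
    by (rule inner_matrix_mult_eq_sum)
  also have "\<dots> = (\<Sum>k\<in>UNIV. \<Sum>i\<in>UNIV. A $ i $ k * inner (Y $ i) (X $ k))"
    by (subst sum.swap) (simp add: inner_commute)
  also have "\<dots> = inner (transpose A ** Y) X"
    by (simp add: inner_matrix_mult_eq_sum transpose_def)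
  also have "\<dots> = inner X (transpose A ** Y)"
    by (rule inner_commute)
  finally show ?thesis .
qed

lemma inner_mult_transpose:
  fixes C :: "real^'n^'m" and X :: "real^'r^'m" and Y :: "real^'r^'n"
  shows "inner C (X ** transpose Y) = inner (C ** Y) X"
  unfolding inner_matrix_mult_eq_sum
  by (simp add: inner_vec_def matrix_matrix_mult_def transpose_def sum_distrib_left mult_ac inner_commute)

lemma bounded_linear_matrix_mult_left: "bounded_linear (\<lambda>X::real^'r^'n. (A::real^'n^'m) ** X)"
proof -
  have "A ** (c *\<^sub>R X) = c *\<^sub>R (A ** X)" for c and X :: "real^'r^'n"
    by (simp add: vec_eq_iff matrix_matrix_mult_def sum_distrib_left mult_ac)
  then have "linear (\<lambda>X::real^'r^'n. A ** X)"
    by (intro linearI) (simp_all add: matrix_add_ldistrib)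
  then show ?thesis
    by (simp add: linear_conv_bounded_linear)
qed

lemma has_derivative_symmetric_quadratic_form:
  fixes C :: "real^'n^'n" and a :: "real^'r^'n"
  assumes "transpose C = C"
  shows "((\<lambda>x. inner C (x ** transpose x)) has_derivative (\<lambda>d. inner (2 *\<^sub>R (C ** a)) d)) (at a)"
proof -
  have "((\<lambda>x. inner (C ** x) x) has_derivative (\<lambda>d. inner (C ** a) d + inner (C ** d) a)) (at a)"
    by (intro bounded_bilinear.FDERIV[OF bounded_bilinear_inner] bounded_linear_matrix_mult_left
        bounded_linear_imp_has_derivative has_derivative_ident)
  moreover have "inner (C ** d) a = inner (C ** a) d" for d
    using inner_matrix_mult_left[of C d a] assms by (simp add: inner_commute)
  ultimately show ?thesis
    by (simp add: inner_mult_transpose)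
qed

lemma frechet_subdiff_finite_iff:
  assumes "h x = ereal r"
  shows "v \<in> frechet_subdiff h x \<longleftrightarrow> (\<forall>e>0. \<exists>d>0. \<forall>y. norm (y - x) < d \<longrightarrow>
    ereal (r + inner v (y - x) - e * norm (y - x)) \<le> h y)"
  by (simp add: frechet_subdiff_def assms)

lemma frechet_subdiff_finite:
  assumes "v \<in> frechet_subdiff h x"
  obtains r where "h x = ereal r"
  using assms by (cases "h x") (simp_all add: frechet_subdiff_def)

lemma frechet_subdiff_add_differentiable:
  fixes f :: "'a::real_inner \<Rightarrow> real" and h :: "'a \<Rightarrow> ereal"
  assumes f: "(f has_derivative (\<lambda>d. inner g d)) (at x)" and v: "v \<in> frechet_subdiff h x"
  shows "v + g \<in> frechet_subdiff (\<lambda>y. ereal (f y) + h y) x"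
proof -
  from v obtain r where r: "h x = ereal r"
    by (rule frechet_subdiff_finite)
  have fr: "ereal (f x) + h x = ereal (f x + r)"
    by (simp add: r)
  show ?thesis
    unfolding frechet_subdiff_finite_iff[of "\<lambda>y. ereal (f y) + h y" x "f x + r", OF fr]
  proof (intro allI impI)
    fix e :: real assume "e > 0"
    obtain d1 where "d1 > 0" and d1: "\<And>y. norm (y - x) < d1 \<Longrightarrow>
        ereal (r + inner v (y - x) - e/2 * norm (y - x)) \<le> h y"
      using v \<open>e > 0\<close> unfolding frechet_subdiff_finite_iff[of h x r, OF r] by (meson half_gt_zero)
    obtain d2 where "d2 > 0" and d2: "\<And>y. norm (y - x) < d2 \<Longrightarrow>
        norm (f y - f x - inner g (y - x)) \<le> e/2 * norm (y - x)"
      using f[unfolded has_derivative_at_alt] \<open>e > 0\<close> by (meson half_gt_zero)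
    have "ereal (f x + r + inner (v + g) (y - x) - e * norm (y - x)) \<le> ereal (f y) + h y"
      if y: "norm (y - x) < min d1 d2" for y
    proof -
      have "norm (f y - f x - inner g (y - x)) \<le> e/2 * norm (y - x)"
        using d2 y by simp
      then have "f x + inner g (y - x) - e/2 * norm (y - x) \<le> f y"
        unfolding real_norm_def abs_le_iff by linarith
      then have "ereal (f x + inner g (y - x) - e/2 * norm (y - x))
          + ereal (r + inner v (y - x) - e/2 * norm (y - x)) \<le> ereal (f y) + h y"
        using d1 y by (intro add_mono) auto
      then show ?thesis
        by (simp add: algebra_simps)
    qed
    with \<open>d1 > 0\<close> \<open>d2 > 0\<close> show "\<exists>d>0. \<forall>y. norm (y - x) < d \<longrightarrow>
        ereal (f x + r + inner (v + g) (y - x) - e * norm (y - x)) \<le> ereal (f y) + h y"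
      by (intro exI[of _ "min d1 d2"]) auto
  qed
qed

lemma ereal_uminus_add_cancel: "ereal (- a) + (ereal a + b) = b"
  by (cases b) auto

lemma frechet_subdiff_add_differentiable_iff:
  fixes f :: "'a::real_inner \<Rightarrow> real" and h :: "'a \<Rightarrow> ereal"
  assumes f: "(f has_derivative (\<lambda>d. inner g d)) (at x)"
  shows "v \<in> frechet_subdiff (\<lambda>y. ereal (f y) + h y) x \<longleftrightarrow> v - g \<in> frechet_subdiff h x"
proof
  have "((\<lambda>y. - f y) has_derivative (\<lambda>d. inner (- g) d)) (at x)"
    using has_derivative_minus[OF f] by simp
  moreover assume "v \<in> frechet_subdiff (\<lambda>y. ereal (f y) + h y) x"
  ultimately have "v + - g \<in> frechet_subdiff (\<lambda>y. ereal (- f y) + (ereal (f y) + h y)) x"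
    by (rule frechet_subdiff_add_differentiable)
  then show "v - g \<in> frechet_subdiff h x"
    by (simp add: ereal_uminus_add_cancel)
next
  assume "v - g \<in> frechet_subdiff h x"
  then show "v \<in> frechet_subdiff (\<lambda>y. ereal (f y) + h y) x"
    using frechet_subdiff_add_differentiable[OF f, of "v - g" h] by simp
qed

lemma limiting_subdiff_add_differentiable:
  fixes f :: "'a::real_inner \<Rightarrow> real" and h :: "'a \<Rightarrow> ereal"
  assumes f: "\<And>y. (f has_derivative (\<lambda>d. inner (g y) d)) (at y)" and g: "isCont g x"
    and v: "v \<in> limiting_subdiff h x"
  shows "v + g x \<in> limiting_subdiff (\<lambda>y. ereal (f y) + h y) x"
proof -
  obtain xs vs where fin: "\<bar>h x\<bar> \<noteq> \<infinity>" and vs: "\<forall>k. vs k \<in> frechet_subdiff h (xs k)"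
    and xs: "xs \<longlonglongrightarrow> x" and hxs: "(\<lambda>k. h (xs k)) \<longlonglongrightarrow> h x" and vs_lim: "vs \<longlonglongrightarrow> v"
    using v unfolding limiting_subdiff_def mem_Collect_eq by metis
  have "(\<lambda>k. f (xs k)) \<longlonglongrightarrow> f x"
    using isCont_tendsto_compose[OF has_derivative_continuous[OF f] xs] .
  then have "(\<lambda>k. ereal (f (xs k)) + h (xs k)) \<longlonglongrightarrow> ereal (f x) + h x"
    by (intro tendsto_add_ereal_general2 hxs) auto
  moreover have "(\<lambda>k. vs k + g (xs k)) \<longlonglongrightarrow> v + g x"
    using vs_lim isCont_tendsto_compose[OF g xs] by (rule tendsto_add)
  moreover have "vs k + g (xs k) \<in> frechet_subdiff (\<lambda>y. ereal (f y) + h y) (xs k)" for k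
    using frechet_subdiff_add_differentiable[OF f] vs by blast
  moreover have "\<bar>ereal (f x) + h x\<bar> \<noteq> \<infinity>"
    using fin by (cases "h x") auto
  ultimately show ?thesis
    unfolding limiting_subdiff_def mem_Collect_eq
    by (intro conjI exI[of _ xs] exI[of _ "\<lambda>k. vs k + g (xs k)"]) (simp_all add: xs)
qed

lemma limiting_subdiff_add_differentiable_iff:
  fixes f :: "'a::real_inner \<Rightarrow> real" and h :: "'a \<Rightarrow> ereal"
  assumes f: "\<And>y. (f has_derivative (\<lambda>d. inner (g y) d)) (at y)" and g: "isCont g x"
  shows "v \<in> limiting_subdiff (\<lambda>y. ereal (f y) + h y) x \<longleftrightarrow> v - g x \<in> limiting_subdiff h x"
proof
  have "((\<lambda>y. - f y) has_derivative (\<lambda>d. inner (- g y) d)) (at y)" for y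
    using has_derivative_minus[OF f] by simp
  moreover have "isCont (\<lambda>y. - g y) x"
    using g by (rule isCont_minus)
  moreover assume "v \<in> limiting_subdiff (\<lambda>y. ereal (f y) + h y) x"
  ultimately have "v + - g x \<in> limiting_subdiff (\<lambda>y. ereal (- f y) + (ereal (f y) + h y)) x"
    by (rule limiting_subdiff_add_differentiable)
  then show "v - g x \<in> limiting_subdiff h x"
    by (simp add: ereal_uminus_add_cancel)
next
  assume "v - g x \<in> limiting_subdiff h x"
  then show "v \<in> limiting_subdiff (\<lambda>y. ereal (f y) + h y) x"
    using limiting_subdiff_add_differentiable[OF f g, of "v - g x" h] by simp
qed

lemma norm_le_if_inner_le_near_zero:
  fixes z :: "'a::real_inner"
  assumes "0 \<le> e" and "d > 0" and le: "\<And>u. norm u < d \<Longrightarrow> inner z u \<le> e * norm u"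
  shows "norm z \<le> e"
proof (cases "z = 0")
  case True
  with \<open>0 \<le> e\<close> show ?thesis by simp
next
  case False
  define t where "t = d / (2 * norm z)"
  have t: "t > 0" "t * norm z < d"
    using \<open>d > 0\<close> False by (simp_all add: t_def)
  then have "t * (norm z * norm z) \<le> t * (e * norm z)"
    using le[of "t *\<^sub>R z"] by (simp add: power2_norm_eq_inner[symmetric] power2_eq_square mult_ac)
  then show ?thesis
    using t False by simp
qed

lemma frechet_subdiff_comp_fstD:
  fixes h :: "'a::real_inner \<Rightarrow> ereal" and z :: "'b::real_inner"
  assumes wz: "(w, z) \<in> frechet_subdiff (\<lambda>p. h (fst p)) (a, b)"
  shows "w \<in> frechet_subdiff h a" and "z = 0"
proof -
  from wz obtain r where r: "h a = ereal r"
    by (rule frechet_subdiff_finite) simp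
  have near: "\<exists>d>0. \<forall>y u. norm (y - a, u) < d \<longrightarrow>
      ereal (r + inner w (y - a) + inner z u - e * norm (y - a, u)) \<le> h y" if "e > 0" for e
  proof -
    obtain d where "d > 0" and d: "\<And>p. norm (p - (a, b)) < d \<Longrightarrow>
        ereal (r + inner (w, z) (p - (a, b)) - e * norm (p - (a, b))) \<le> h (fst p)"
      using wz \<open>e > 0\<close> by (auto simp: frechet_subdiff_finite_iff r)
    have "ereal (r + inner w (y - a) + inner z u - e * norm (y - a, u)) \<le> h y"
      if "norm (y - a, u) < d" for y u
      using d[of "(y, b + u)"] that by (simp add: add.assoc)
    with \<open>d > 0\<close> show ?thesis by blast
  qed
  have "norm z \<le> e" if "e > 0" for e
  proof -
    obtain d where "d > 0" and d: "\<And>y u. norm (y - a, u) < d \<Longrightarrow>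
        ereal (r + inner w (y - a) + inner z u - e * norm (y - a, u)) \<le> h y"
      using near[OF \<open>e > 0\<close>] by blast
    have "inner z u \<le> e * norm u" if "norm u < d" for u
      using d[of a u] that by (simp add: r norm_Pair)
    with \<open>e > 0\<close> \<open>d > 0\<close> show ?thesis
      by (intro norm_le_if_inner_le_near_zero[where d=d]) auto
  qed
  then show "z = 0"
    by (metis field_le_epsilon add_0 norm_le_zero_iff)
  show "w \<in> frechet_subdiff h a"
    unfolding frechet_subdiff_finite_iff[of h a r, OF r]
  proof (intro allI impI)
    fix e :: real assume "e > 0"
    then obtain d where "d > 0" and d: "\<And>y. norm (y - a, 0::'b) < d \<Longrightarrow>
        ereal (r + inner w (y - a) + inner z 0 - e * norm (y - a, 0::'b)) \<le> h y"
      using near by blast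
    then show "\<exists>d>0. \<forall>y. norm (y - a) < d \<longrightarrow> ereal (r + inner w (y - a) - e * norm (y - a)) \<le> h y"
      by (auto simp: norm_Pair)
  qed
qed

lemma frechet_subdiff_comp_fstI:
  fixes h :: "'a::real_inner \<Rightarrow> ereal"
  assumes w: "w \<in> frechet_subdiff h a"
  shows "(w, 0::'b::real_inner) \<in> frechet_subdiff (\<lambda>p. h (fst p)) (a, b)"
proof -
  from w obtain r where r: "h a = ereal r"
    by (rule frechet_subdiff_finite)
  have r_ab: "h (fst (a, b)) = ereal r"
    using r by simp
  show ?thesis
    unfolding frechet_subdiff_finite_iff[of "\<lambda>p. h (fst p)" "(a, b)" r, OF r_ab]
  proof (intro allI impI)
    fix e :: real assume "e > 0"
    then obtain d where "d > 0" and d: "\<And>y. norm (y - a) < d \<Longrightarrow>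
        ereal (r + inner w (y - a) - e * norm (y - a)) \<le> h y"
      using w by (auto simp: frechet_subdiff_finite_iff r)
    have "ereal (r + inner (w, 0::'b) (p - (a, b)) - e * norm (p - (a, b))) \<le> h (fst p)"
      if p: "norm (p - (a, b)) < d" for p
    proof -
      have fst_le: "norm (fst p - a) \<le> norm (p - (a, b))"
        using norm_fst_le[of "fst p - a" "snd p - b"] by (cases p) simp
      moreover have "inner (w, 0::'b) (p - (a, b)) = inner w (fst p - a)"
        by (cases p) simp
      ultimately have "ereal (r + inner (w, 0::'b) (p - (a, b)) - e * norm (p - (a, b)))
          \<le> ereal (r + inner w (fst p - a) - e * norm (fst p - a))"
        using \<open>e > 0\<close> by (simp add: mult_left_mono)
      also have "\<dots> \<le> h (fst p)"
        using d fst_le p by simp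
      finally show ?thesis .
    qed
    with \<open>d > 0\<close> show "\<exists>d>0. \<forall>p. norm (p - (a, b)) < d \<longrightarrow>
        ereal (r + inner (w, 0::'b) (p - (a, b)) - e * norm (p - (a, b))) \<le> h (fst p)"
      by blast
  qed
qed

lemma frechet_subdiff_comp_fst:
  fixes h :: "'a::real_inner \<Rightarrow> ereal"
  shows "(w, z) \<in> frechet_subdiff (\<lambda>p. h (fst p)) (a, b) \<longleftrightarrow>
    w \<in> frechet_subdiff h a \<and> z = (0::'b::real_inner)"
  using frechet_subdiff_comp_fstD frechet_subdiff_comp_fstI by blast

lemma limiting_subdiff_comp_fst:
  fixes h :: "'a::real_inner \<Rightarrow> ereal"
  shows "(w, z) \<in> limiting_subdiff (\<lambda>p. h (fst p)) (a, b) \<longleftrightarrow>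
    w \<in> limiting_subdiff h a \<and> z = (0::'b::real_inner)"
proof
  assume "(w, z) \<in> limiting_subdiff (\<lambda>p. h (fst p)) (a, b)"
  then obtain ps vs where fin: "\<bar>h a\<bar> \<noteq> \<infinity>"
    and vs: "\<forall>k. vs k \<in> frechet_subdiff (\<lambda>p. h (fst p)) (ps k)" and ps: "ps \<longlonglongrightarrow> (a, b)"
    and hps: "(\<lambda>k. h (fst (ps k))) \<longlonglongrightarrow> h a" and vs_lim: "vs \<longlonglongrightarrow> (w, z)"
    unfolding limiting_subdiff_def mem_Collect_eq fst_conv by metis
  have vs_fst: "fst (vs k) \<in> frechet_subdiff h (fst (ps k))" and vs_snd: "snd (vs k) = 0" for k
    using vs frechet_subdiff_comp_fst[of "fst (vs k)" "snd (vs k)" h "fst (ps k)" "snd (ps k)"]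
    by simp_all
  have "(\<lambda>k. snd (vs k)) \<longlonglongrightarrow> z"
    using tendsto_snd[OF vs_lim] by simp
  then have "z = 0"
    by (simp add: vs_snd LIMSEQ_const_iff)
  moreover have "w \<in> limiting_subdiff h a"
    unfolding limiting_subdiff_def mem_Collect_eq
    using fin vs_fst tendsto_fst[OF ps] hps tendsto_fst[OF vs_lim]
    by (intro conjI exI[of _ "\<lambda>k. fst (ps k)"] exI[of _ "\<lambda>k. fst (vs k)"]) auto
  ultimately show "w \<in> limiting_subdiff h a \<and> z = 0" by simp
next
  assume "w \<in> limiting_subdiff h a \<and> z = 0"
  then obtain xs ws where fin: "\<bar>h a\<bar> \<noteq> \<infinity>"
    and ws: "\<forall>k. ws k \<in> frechet_subdiff h (xs k)" and xs: "xs \<longlonglongrightarrow> a"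
    and hxs: "(\<lambda>k. h (xs k)) \<longlonglongrightarrow> h a" and ws_lim: "ws \<longlonglongrightarrow> w" and "z = 0"
    unfolding limiting_subdiff_def mem_Collect_eq fst_conv by metis
  have "(ws k, z) \<in> frechet_subdiff (\<lambda>p. h (fst p)) (xs k, b)" for k
    using ws \<open>z = 0\<close> by (simp add: frechet_subdiff_comp_fst)
  moreover have "(\<lambda>k. (xs k, b)) \<longlonglongrightarrow> (a, b)" and "(\<lambda>k. (ws k, z)) \<longlonglongrightarrow> (w, z)"
    using xs ws_lim by (auto intro: tendsto_Pair)
  ultimately show "(w, z) \<in> limiting_subdiff (\<lambda>p. h (fst p)) (a, b)"
    unfolding limiting_subdiff_def mem_Collect_eq using fin hxs
    by (intro conjI exI[of _ "\<lambda>k. (xs k, b)"] exI[of _ "\<lambda>k. (ws k, z)"]) auto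
qed

lemma row_ind_eq_ind_oblique: "row_ind = ind oblique"
proof
  fix s :: "real^'r^'n"
  show "row_ind s = ind oblique s"
  proof (cases "s \<in> oblique")
    case True
    then show ?thesis by (simp add: row_ind_def ind_def oblique_def)
  next
    case False
    then obtain i where "norm (s $ i) \<noteq> 1" by (auto simp: oblique_def)
    then have "row_ind s = \<infinity>"
      unfolding row_ind_def by (subst sum_Pinfty) (auto simp: ind_def)
    with False show ?thesis by (simp add: ind_def)
  qed
qed

lemma oblique_if_limiting_subdiff_row_ind:
  assumes "v \<in> limiting_subdiff row_ind s"
  shows "s \<in> oblique"
proof -
  have "\<bar>ind oblique s\<bar> \<noteq> \<infinity>"
    using assms by (simp add: limiting_subdiff_def row_ind_eq_ind_oblique)
  then show ?thesis
    by (simp add: ind_def split: if_splits)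
qed

definition G_rho_smooth :: "real^'n^'n \<Rightarrow> real \<Rightarrow> (real^'r^'n) \<times> (real^'r^'n) \<Rightarrow> real" where
  "G_rho_smooth C \<rho> p = inner C (fst p ** transpose (fst p)) + \<rho> / 2 * (norm (fst p - snd p))^2"

definition G_rho_grad ::
    "real^'n^'n \<Rightarrow> real \<Rightarrow> (real^'r^'n) \<times> (real^'r^'n) \<Rightarrow> (real^'r^'n) \<times> (real^'r^'n)" where
  "G_rho_grad C \<rho> p = (2 *\<^sub>R (C ** fst p) + \<rho> *\<^sub>R (fst p - snd p), \<rho> *\<^sub>R (snd p - fst p))"

lemma G_rho_eq: "G_rho C \<rho> = (\<lambda>p. ereal (G_rho_smooth C \<rho> p) + row_ind (fst p))"
  by (simp add: fun_eq_iff G_rho_def G_rho_smooth_def)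

lemma has_derivative_G_rho_smooth:
  assumes "transpose C = C"
  shows "(G_rho_smooth C \<rho> has_derivative (\<lambda>d. inner (G_rho_grad C \<rho> p) d)) (at p)"
proof -
  have quad: "((\<lambda>q. inner C (fst q ** transpose (fst q))) has_derivative
      (\<lambda>d. inner (2 *\<^sub>R (C ** fst p)) (fst d))) (at p)"
    using has_derivative_compose[OF has_derivative_fst[OF has_derivative_ident]
        has_derivative_symmetric_quadratic_form[OF assms]] by simp
  have diff: "((\<lambda>q. fst q - snd q) has_derivative (\<lambda>d. fst d - snd d)) (at p)"
    by (intro has_derivative_diff has_derivative_fst has_derivative_snd has_derivative_ident)
  have dist: "((\<lambda>q. \<rho> / 2 * (norm (fst q - snd q))^2) has_derivative
      (\<lambda>d. \<rho> / 2 * (2 *\<^sub>R inner (fst p - snd p) (fst d - snd d)))) (at p)"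
    using has_derivative_compose[OF diff has_derivative_sqnorm_at] by (rule has_derivative_mult_right)
  have grad: "inner (G_rho_grad C \<rho> p) = (\<lambda>d. inner (2 *\<^sub>R (C ** fst p)) (fst d)
      + \<rho> / 2 * (2 *\<^sub>R inner (fst p - snd p) (fst d - snd d)))"
    by (simp add: fun_eq_iff G_rho_grad_def inner_prod_def inner_add_left inner_diff_left
        inner_diff_right right_diff_distrib)
  show ?thesis
    unfolding G_rho_smooth_def[abs_def] grad by (rule has_derivative_add[OF quad dist])
qed

lemma isCont_G_rho_grad: "isCont (G_rho_grad C \<rho>) p"
  unfolding G_rho_grad_def[abs_def]
  by (intro continuous_intros bounded_linear.continuous[OF bounded_linear_matrix_mult_left])

theorem lemma6:
  fixes C :: "real^'n^'n" and \<rho> :: real and st s :: "real^'r^'n"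
  assumes "transpose C = C" and "\<rho> > 0"
  shows "critical_point (G_rho C \<rho>) (st, s) \<longleftrightarrow> s = st \<and> constrained_critical C st"
proof -
  have "critical_point (G_rho C \<rho>) (st, s) \<longleftrightarrow>
      - G_rho_grad C \<rho> (st, s) \<in> limiting_subdiff (\<lambda>p. row_ind (fst p)) (st, s)"
    unfolding critical_point_def G_rho_eq
    using limiting_subdiff_add_differentiable_iff[OF has_derivative_G_rho_smooth[OF assms(1)]
        isCont_G_rho_grad, where h = "\<lambda>p. row_ind (fst p)" and v = 0] by simp
  also have "\<dots> \<longleftrightarrow> - (2 *\<^sub>R (C ** st) + \<rho> *\<^sub>R (st - s)) \<in> limiting_subdiff row_ind st
      \<and> \<rho> *\<^sub>R (st - s) = 0"
    using limiting_subdiff_comp_fst[of "- (2 *\<^sub>R (C ** st) + \<rho> *\<^sub>R (st - s))" "\<rho> *\<^sub>R (st - s)"]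
    by (simp add: G_rho_grad_def scaleR_diff_right)
  also have "\<dots> \<longleftrightarrow> s = st \<and> - (2 *\<^sub>R (C ** st)) \<in> limiting_subdiff row_ind st"
    using \<open>\<rho> > 0\<close> by auto
  also have "\<dots> \<longleftrightarrow> s = st \<and> constrained_critical C st"
    using oblique_if_limiting_subdiff_row_ind unfolding constrained_critical_def
    by (auto simp: add_eq_0_iff)
  finally show ?thesis .
qed

end
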